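(* Let $p\in\mathcal H(2,d)$ and suppose $p(x,y)=a(x)+y\,b(x)$ for polynomials $a,b$ in one variable. Then $N(p)\ge d+1$; the monomial $x^d$ occurs in $p$, and for each $j$ with $0\le j\le d-1$ the monomial $x^jy$ occurs in $p$. Moreover $N(p)=d+1$ if and only if $p(x,y)=x^d+y(x^{d-1}+\cdots+x+1)$.
   Context: $\mathcal H(2,d)$ is the set of real polynomials in $(x,y)$ of total degree exactly $d$, with all coefficients nonnegative, such that $p(x,y)=1$ whenever $x+y=1$. $N(p)$ denotes the number of distinct monomials occurring with nonzero coefficient in $p$. *)

theory Defs
  imports Main "HOL.Real"
begin

text \<open>A real polynomial in two variables (x,y) is represented by its coefficient
function c :: nat \<times> nat \<Rightarrow> real with finite support; c (i,j) is the
coefficient of the monomial x^i y^j.\<close>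

definition bsupp :: "(nat \<times> nat \<Rightarrow> real) \<Rightarrow> (nat \<times> nat) set" where
  "bsupp c = {m. c m \<noteq> 0}"

definition is_bipoly :: "(nat \<times> nat \<Rightarrow> real) \<Rightarrow> bool" where
  "is_bipoly c \<longleftrightarrow> finite (bsupp c)"

definition beval :: "(nat \<times> nat \<Rightarrow> real) \<Rightarrow> real \<Rightarrow> real \<Rightarrow> real" where
  "beval c x y = (\<Sum>m\<in>bsupp c. c m * x ^ fst m * y ^ snd m)"

definition btotal_degree :: "(nat \<times> nat \<Rightarrow> real) \<Rightarrow> nat" where
  "btotal_degree c = Max ((\<lambda>m. fst m + snd m) ` bsupp c)"

definition N :: "(nat \<times> nat \<Rightarrow> real) \<Rightarrow> nat" where
  "N c = card (bsupp c)"

definition H2 :: "nat \<Rightarrow> (nat \<times> nat \<Rightarrow> real) \<Rightarrow> bool" where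
  "H2 d c \<longleftrightarrow> is_bipoly c \<and> bsupp c \<noteq> {} \<and> btotal_degree c = d
     \<and> (\<forall>m. c m \<ge> 0) \<and> (\<forall>x y. x + y = 1 \<longrightarrow> beval c x y = 1)"

end

theory Submission
  imports Defs "HOL-Computational_Algebra.Polynomial"
begin

text \<open>Write \<open>p = a(x) + y b(x)\<close> with coefficients \<open>a\<^sub>k = c (k,0)\<close>, \<open>b\<^sub>k = c (k,1)\<close>.
  Substituting \<open>y = 1 - x\<close> and comparing coefficients in \<open>a(x) + (1 - x) b(x) = 1\<close> gives
  \<open>a\<^sub>0 + b\<^sub>0 = 1\<close> and \<open>a\<^sub>k\<^sub>+\<^sub>1 + b\<^sub>k\<^sub>+\<^sub>1 = b\<^sub>k\<close>. With nonnegative coefficients the \<open>b\<^sub>k\<close>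
  decrease, so they are positive up to some index \<open>D\<close> and zero from there on; then \<open>a\<^sub>k = 0\<close>
  for \<open>k > D\<close> and \<open>a\<^sub>D = b\<^sub>D\<^sub>-\<^sub>1 > 0\<close>, so \<open>D = d\<close> and the \<open>d + 1\<close> monomials \<open>x\<^sup>d\<close>,
  \<open>x\<^sup>j y\<close> (\<open>j < d\<close>) all occur. If there are no others, all \<open>a\<^sub>k\<close> with \<open>k \<noteq> d\<close> vanish
  and the recurrence forces every remaining coefficient to be \<open>1\<close>.\<close>

lemma telescoping_nonneg_profile:
  fixes a b :: "nat \<Rightarrow> real"
  assumes a_nonneg: "\<And>k. a k \<ge> 0" and b_nonneg: "\<And>k. b k \<ge> 0"
    and init: "a 0 + b 0 = 1" and step: "\<And>k. a (Suc k) + b (Suc k) = b k"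
    and "b n = 0"
  obtains D where "\<And>k. k < D \<Longrightarrow> b k > 0" "\<And>k. D \<le> k \<Longrightarrow> b k = 0"
    "\<And>k. D < k \<Longrightarrow> a k = 0" "a D > 0"
proof
  define D where "D = (LEAST k. b k = 0)"
  have "b (Suc k) \<le> b k" for k
    using step[of k] a_nonneg[of "Suc k"] by linarith
  then have "decseq b" by (rule decseq_SucI)
  have bD: "b D = 0"
    unfolding D_def using \<open>b n = 0\<close> by (rule LeastI)
  show b_pos: "b k > 0" if "k < D" for k
    using not_less_Least[OF that[unfolded D_def]] b_nonneg[of k] by simp
  show b_zero: "b k = 0" if "D \<le> k" for k
    using decseqD[OF \<open>decseq b\<close> that] bD b_nonneg[of k] by simp
  show "a k = 0" if "D < k" for k
  proof -
    obtain m where "k = Suc m" "D \<le> m" using \<open>D < k\<close> by (cases k) auto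
    then show ?thesis using step[of m] b_zero[of m] b_zero[of k] by simp
  qed
  show "a D > 0"
  proof (cases D)
    case 0
    then show ?thesis using init bD by simp
  next
    case (Suc m)
    then show ?thesis using step[of m] bD b_pos[of m] by simp
  qed
qed

lemma telescoping_rigid:
  fixes a b :: "nat \<Rightarrow> real"
  assumes init: "a 0 + b 0 = 1" and step: "\<And>k. a (Suc k) + b (Suc k) = b k"
    and a_zero: "\<And>k. k \<noteq> D \<Longrightarrow> a k = 0"
  shows "\<And>k. k < D \<Longrightarrow> b k = 1" and "a D + b D = 1"
proof -
  show b_one: "b k = 1" if "k < D" for k
    using that
  proof (induction k)
    case 0
    then show ?case using init a_zero[of 0] by simp
  next
    case (Suc k)
    then show ?case using step[of k] a_zero[of "Suc k"] by simp
  qed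
  show "a D + b D = 1"
    using init step b_one by (cases D) auto
qed

lemma beval_eq_sum_superset:
  assumes "bsupp c \<subseteq> A" and "finite A"
  shows "beval c x y = (\<Sum>m\<in>A. c m * x ^ fst m * y ^ snd m)"
  unfolding beval_def
  by (rule sum.mono_neutral_left) (use assms in \<open>auto simp: bsupp_def\<close>)

lemma bipoly_coeff_eventually_zero:
  assumes "is_bipoly c"
  obtains M where "\<And>i j. M \<le> i \<Longrightarrow> c (i, j) = 0"
proof -
  have "finite (fst ` bsupp c)"
    using assms by (simp add: is_bipoly_def)
  then obtain M where "\<forall>i\<in>fst ` bsupp c. i < M"
    using finite_nat_set_iff_bounded by blast
  then have "c (i, j) = 0" if "M \<le> i" for i j
    using that by (force simp: bsupp_def)
  then show ?thesis using that by blast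
qed

lemma linear_in_y_coeff_recurrence:
  fixes c :: "nat \<times> nat \<Rightarrow> real"
  assumes "is_bipoly c" and y_linear: "\<And>i j. 2 \<le> j \<Longrightarrow> c (i, j) = 0"
    and on_line: "\<And>x. beval c x (1 - x) = 1"
  shows "c (0, 0) + c (0, 1) = 1"
    and "\<And>k. c (Suc k, 0) + c (Suc k, 1) = c (k, 1)"
proof -
  obtain M where vanish: "\<And>i j. M \<le> i \<Longrightarrow> c (i, j) = 0"
    using bipoly_coeff_eventually_zero[OF \<open>is_bipoly c\<close>] by blast
  have supp: "bsupp c \<subseteq> {..<M} \<times> {..<2}"
    using vanish y_linear by (force simp: bsupp_def not_le)
  define pa where "pa = (\<Sum>i<M. monom (c (i, 0)) i)"
  define pb where "pb = (\<Sum>i<M. monom (c (i, 1)) i)"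
  have coeff_pa: "coeff pa k = c (k, 0)" for k
    unfolding pa_def by (auto simp: coeff_sum vanish)
  have coeff_pb: "coeff pb k = c (k, 1)" for k
    unfolding pb_def by (auto simp: coeff_sum vanish)
  have "poly (pa + pb - pCons 0 pb) x = poly 1 x" for x
  proof -
    have "beval c x (1 - x) = (\<Sum>i<M. \<Sum>j<2. c (i, j) * x ^ i * (1 - x) ^ j)"
      by (simp add: beval_eq_sum_superset[OF supp] sum.cartesian_product case_prod_beta')
    also have "\<dots> = poly (pa + pb - pCons 0 pb) x"
      by (simp add: pa_def pb_def poly_sum poly_monom numeral_2_eq_2 algebra_simps
          sum.distrib sum_subtractf sum_distrib_left)
    finally show ?thesis using on_line[of x] by simp
  qed
  then have poly_id: "pa + pb - pCons 0 pb = 1"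
    using poly_eq_poly_eq_iff by blast
  show "c (0, 0) + c (0, 1) = 1"
    using arg_cong[OF poly_id, of "\<lambda>p. coeff p 0"] by (simp add: coeff_pa coeff_pb)
  show "c (Suc k, 0) + c (Suc k, 1) = c (k, 1)" for k
    using arg_cong[OF poly_id, of "\<lambda>p. coeff p (Suc k)"] by (simp add: coeff_pa coeff_pb)
qed

lemma btotal_degree_eqI:
  assumes "finite (bsupp c)" and "m \<in> bsupp c"
    and "\<And>m'. m' \<in> bsupp c \<Longrightarrow> fst m' + snd m' \<le> fst m + snd m"
  shows "btotal_degree c = fst m + snd m"
  unfolding btotal_degree_def by (rule Max_eqI) (use assms in auto)

lemma H2_linear_in_y_coeff_pos:
  assumes "H2 d c" and y_linear: "\<And>i j. 2 \<le> j \<Longrightarrow> c (i, j) = 0"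
  shows "\<And>k. k < d \<Longrightarrow> c (k, 1) > 0" and "c (d, 0) > 0"
proof -
  have bipoly: "is_bipoly c" and nonneg: "\<And>m. c m \<ge> 0"
    and on_line: "\<And>x. beval c x (1 - x) = 1"
    using \<open>H2 d c\<close> by (auto simp: H2_def)
  note rec = linear_in_y_coeff_recurrence[OF bipoly y_linear on_line]
  obtain M where "\<And>i j. M \<le> i \<Longrightarrow> c (i, j) = 0"
    using bipoly_coeff_eventually_zero[OF bipoly] by blast
  then have "c (M, 1) = 0" by simp
  then obtain D where b_pos: "\<And>k. k < D \<Longrightarrow> c (k, 1) > 0"
    and b_zero: "\<And>k. D \<le> k \<Longrightarrow> c (k, 1) = 0"
    and a_zero: "\<And>k. D < k \<Longrightarrow> c (k, 0) = 0" and a_pos: "c (D, 0) > 0"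
    using telescoping_nonneg_profile[of "\<lambda>k. c (k, 0)" "\<lambda>k. c (k, 1)"] nonneg rec
    by blast
  have "i + j \<le> D" if "(i, j) \<in> bsupp c" for i j
  proof -
    have nz: "c (i, j) \<noteq> 0" using that by (simp add: bsupp_def)
    then consider "j = 0" | "j = 1" using y_linear by fastforce
    then show ?thesis
    proof cases
      case 1
      then show ?thesis using nz a_zero[of i] by fastforce
    next
      case 2
      then show ?thesis using nz b_zero[of i] by fastforce
    qed
  qed
  then have "btotal_degree c = D"
    using btotal_degree_eqI[of c "(D, 0)"] bipoly a_pos
    by (force simp: is_bipoly_def bsupp_def)
  then have "D = d" using \<open>H2 d c\<close> by (simp add: H2_def)
  with b_pos a_pos show "\<And>k. k < d \<Longrightarrow> c (k, 1) > 0" and "c (d, 0) > 0"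
    by blast+
qed

definition staircase_support :: "nat \<Rightarrow> (nat \<times> nat) set" where
  "staircase_support d = insert (d, 0) ((\<lambda>i. (i, 1)) ` {..<d})"

definition staircase_poly :: "nat \<Rightarrow> nat \<times> nat \<Rightarrow> real" where
  "staircase_poly d = (\<lambda>(i, j). if (i = d \<and> j = 0) \<or> (i < d \<and> j = 1) then 1 else 0)"

lemma card_staircase_support: "card (staircase_support d) = d + 1"
  unfolding staircase_support_def
  by (subst card_insert_disjoint) (auto simp: card_image inj_on_def)

lemma staircase_poly_eq_of_bool: "staircase_poly d m = of_bool (m \<in> staircase_support d)"
  by (cases m) (auto simp: staircase_poly_def staircase_support_def)

lemma bsupp_staircase_poly: "bsupp (staircase_poly d) = staircase_support d"
  by (simp add: bsupp_def staircase_poly_eq_of_bool)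

lemma eq_staircase_poly_if_bsupp:
  assumes init: "c (0, 0) + c (0, 1) = 1"
    and step: "\<And>k. c (Suc k, 0) + c (Suc k, 1) = c (k, 1)"
    and supp: "bsupp c = staircase_support d"
  shows "c = staircase_poly d"
proof
  fix m :: "nat \<times> nat"
  have outside: "c m' = 0" if "m' \<notin> staircase_support d" for m'
    using that supp by (auto simp: bsupp_def)
  have "c (k, 0) = 0" if "k \<noteq> d" for k
    using that by (intro outside) (auto simp: staircase_support_def)
  then have "\<And>k. k < d \<Longrightarrow> c (k, 1) = 1" and "c (d, 0) + c (d, 1) = 1"
    using telescoping_rigid[of "\<lambda>k. c (k, 0)" "\<lambda>k. c (k, 1)" d] init step by blast+
  moreover have "c (d, 1) = 0"
    by (rule outside) (auto simp: staircase_support_def)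
  ultimately have "c m' = 1" if "m' \<in> staircase_support d" for m'
    using that by (auto simp: staircase_support_def)
  with outside show "c m = staircase_poly d m"
    by (simp add: staircase_poly_eq_of_bool)
qed

theorem lemma7:
  fixes d :: nat and c :: "nat \<times> nat \<Rightarrow> real"
  assumes "H2 d c"
    and "\<forall>i j. j \<ge> 2 \<longrightarrow> c (i, j) = 0"
  shows "N c \<ge> d + 1
    \<and> c (d, 0) \<noteq> 0
    \<and> (\<forall>j. j < d \<longrightarrow> c (j, 1) \<noteq> 0)
    \<and> (N c = d + 1 \<longleftrightarrow>
         c = (\<lambda>(i, j). if (i = d \<and> j = 0) \<or> (i < d \<and> j = 1) then 1 else 0))"
proof -
  have y_linear: "\<And>i j. 2 \<le> j \<Longrightarrow> c (i, j) = 0" using assms(2) by blast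
  have bipoly: "is_bipoly c" and on_line: "\<And>x. beval c x (1 - x) = 1"
    using \<open>H2 d c\<close> by (auto simp: H2_def)
  then have fin: "finite (bsupp c)" by (simp add: is_bipoly_def)
  note rec = linear_in_y_coeff_recurrence[OF bipoly y_linear on_line]
  note coeff_pos = H2_linear_in_y_coeff_pos[OF \<open>H2 d c\<close> y_linear]
  have sub: "staircase_support d \<subseteq> bsupp c"
    using coeff_pos by (force simp: staircase_support_def bsupp_def)
  have "N c = d + 1 \<longleftrightarrow> c = staircase_poly d"
  proof
    assume "N c = d + 1"
    then have "bsupp c = staircase_support d"
      using card_subset_eq[OF fin sub] by (simp add: N_def card_staircase_support)
    with rec show "c = staircase_poly d" by (rule eq_staircase_poly_if_bsupp)
  qed (simp add: N_def bsupp_staircase_poly card_staircase_support)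
  moreover have "N c \<ge> d + 1"
    using card_mono[OF fin sub] by (simp add: N_def card_staircase_support)
  moreover have "\<forall>j. j < d \<longrightarrow> c (j, 1) \<noteq> 0" and "c (d, 0) \<noteq> 0"
    using coeff_pos by fastforce+
  ultimately show ?thesis
    unfolding staircase_poly_def by blast
qed

end
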